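(* Let $V$ be a finite set with $|V|=n$, let $d$ be a monotone and consistent symmetric set function on $V$, let $\tau\in\mathbb{R}$, and let $v_1,\dots,v_n$ be a lax-back order with threshold $\tau$ for $(V,d)$. Then for every $2\leq i\leq n$, $$\min\{\tau,\lambda_{(V,d)}(v_{i-1},v_i)\}\geq\min\{\tau, d(v_i,\{v_1,\dots,v_{i-1}\})\}.$$
   Context: A symmetric set function $d$ on a finite set $V$ assigns a real number $d(S,T)$ to every ordered pair $(S,T)$ of disjoint subsets of $V$, such that $d(S,T)=d(T,S)$. It is monotone if $d(S,T')\leq d(S,T)$ whenever $S,T$ are disjoint and $T'\subseteq T$; consistent if for all pairwise disjoint $R,S,T$, $d(S,R)\geq d(T,R)$ implies $d(S,R\cup T)\geq d(S\cup R,T)$. For $s,t\in V$, $\lambda_{(V,d)}(s,t)=\min\{d(S,V\setminus S)\mid s\in S\subseteq V,\ t\notin S\}$. Singletons $\{v\}$ are written $v$. An ordering $v_1,\dots,v_n$ of $V$ is a lax-back order with threshold $\tau$ for $(V,d)$ if $\min\{\tau,d(v_i,\{v_1,\dots,v_{i-1}\})\}\geq\min\{\tau,d(v_j,\{v_1,\dots,v_{i-1}\})\}$ for all $1\leq i<j\leq n$. *)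

theory Defs
  imports Complex_Main
begin

text \<open>A set function on V: d S T for disjoint subsets S, T of V (values outside are irrelevant).\<close>

definition symmetric_setfun :: "'a set \<Rightarrow> ('a set \<Rightarrow> 'a set \<Rightarrow> real) \<Rightarrow> bool" where
  "symmetric_setfun V d \<longleftrightarrow>
     (\<forall>S T. S \<subseteq> V \<and> T \<subseteq> V \<and> S \<inter> T = {} \<longrightarrow> d S T = d T S)"

definition monotone_setfun :: "'a set \<Rightarrow> ('a set \<Rightarrow> 'a set \<Rightarrow> real) \<Rightarrow> bool" where
  "monotone_setfun V d \<longleftrightarrow>
     (\<forall>S T T'. S \<subseteq> V \<and> T \<subseteq> V \<and> S \<inter> T = {} \<and> T' \<subseteq> T \<longrightarrow> d S T' \<le> d S T)"

definition consistent_setfun :: "'a set \<Rightarrow> ('a set \<Rightarrow> 'a set \<Rightarrow> real) \<Rightarrow> bool" where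
  "consistent_setfun V d \<longleftrightarrow>
     (\<forall>R S T. R \<subseteq> V \<and> S \<subseteq> V \<and> T \<subseteq> V \<and> R \<inter> S = {} \<and> R \<inter> T = {} \<and> S \<inter> T = {} \<longrightarrow>
        d S R \<ge> d T R \<longrightarrow> d S (R \<union> T) \<ge> d (S \<union> R) T)"

definition lambda_conn :: "'a set \<Rightarrow> ('a set \<Rightarrow> 'a set \<Rightarrow> real) \<Rightarrow> 'a \<Rightarrow> 'a \<Rightarrow> real" where
  "lambda_conn V d s t = Min {d S (V - S) | S. s \<in> S \<and> S \<subseteq> V \<and> t \<notin> S}"

text \<open>An ordering v_1..v_n of V is represented as a distinct list vs with set vs = V;
  v_(i+1) = vs ! i and {v_1..v_i} = set (take i vs).\<close>

definition lax_back_order :: "'a set \<Rightarrow> ('a set \<Rightarrow> 'a set \<Rightarrow> real) \<Rightarrow> real \<Rightarrow> 'a list \<Rightarrow> bool" where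
  "lax_back_order V d \<tau> vs \<longleftrightarrow> distinct vs \<and> set vs = V \<and>
     (\<forall>i j. i < j \<and> j < length vs \<longrightarrow>
        min \<tau> (d {vs ! i} (set (take i vs))) \<ge> min \<tau> (d {vs ! j} (set (take i vs))))"

end

theory Submission
  imports Defs
begin

text \<open>Write \<open>v\<^sub>k = vs ! k\<close> and \<open>P\<^sub>k = {v\<^sub>0, ..., v\<^sub>k\<^sub>-\<^sub>1}\<close>. The key claim is that
  \<open>min \<tau> (d A B) \<ge> min \<tau> (d {v\<^sub>m} P\<^sub>m)\<close> for every partition \<open>(A, B)\<close> of \<open>P\<^sub>m\<^sub>+\<^sub>1\<close> with
  \<open>v\<^sub>m\<^sub>-\<^sub>1 \<in> A\<close> and \<open>v\<^sub>m \<in> B\<close>; the theorem follows by restricting a minimum cut separating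
  \<open>v\<^sub>i\<^sub>-\<^sub>2\<close> from \<open>v\<^sub>i\<^sub>-\<^sub>1\<close> to \<open>P\<^sub>i\<close>, which only decreases \<open>d\<close> by monotonicity. Let \<open>B' = B - {v\<^sub>m}\<close>; if it is empty we
  are done by symmetry. Otherwise let \<open>v\<^sub>j\<close> be the last vertex of \<open>B'\<close>, so \<open>v\<^sub>j\<^sub>+\<^sub>1 \<in> A\<close>.
  If \<open>d {v\<^sub>m} B' \<le> d A B'\<close>, consistency moves \<open>v\<^sub>m\<close> over to \<open>B'\<close>. Otherwise monotonicity,
  the lax-back property at \<open>j + 1\<close> and the induction hypothesis for the partition
  \<open>(B', A \<inter> P\<^sub>j\<^sub>+\<^sub>2)\<close> give \<open>min \<tau> (d {v\<^sub>m} B') \<le> min \<tau> (d A B') < d {v\<^sub>m} B'\<close>, whence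
  \<open>d A B \<ge> d A B' \<ge> \<tau>\<close>.\<close>

lemma nth_mem_set_take: "l < n \<Longrightarrow> l < length xs \<Longrightarrow> xs ! l \<in> set (take n xs)"
  by (metis length_take min_less_iff_conj nth_mem nth_take)

lemma nth_in_set_take_iff:
  assumes "distinct xs" "k < length xs"
  shows "xs ! k \<in> set (take n xs) \<longleftrightarrow> k < n"
  using assms by (auto simp: in_set_conv_nth nth_eq_iff_index_eq)

lemma obtain_last_index_in:
  assumes "m \<le> length xs" "B \<subseteq> set (take m xs)" "B \<noteq> {}" "xs ! (m - 1) \<notin> B"
  obtains j where "Suc j < m" "xs ! j \<in> B" "xs ! Suc j \<notin> B" "B \<subseteq> set (take (Suc j) xs)"
proof -
  define J where "J = {l. l < m \<and> xs ! l \<in> B}"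
  have B_nth: "\<exists>l < m. y = xs ! l" if "y \<in> B" for y
    using that assms(2) by (fastforce simp: in_set_conv_nth)
  have "finite J" "J \<noteq> {}"
    using B_nth assms(3) by (auto simp: J_def)
  define j where "j = Max J"
  have j: "j < m" "xs ! j \<in> B" and j_max: "\<And>l. l < m \<Longrightarrow> xs ! l \<in> B \<Longrightarrow> l \<le> j"
    using Max_in[OF \<open>finite J\<close> \<open>J \<noteq> {}\<close>] Max_ge[OF \<open>finite J\<close>] by (auto simp: j_def J_def)
  have "Suc j < m"
    using j assms(4) by (metis Suc_lessI diff_Suc_1)
  moreover have "xs ! Suc j \<notin> B"
    using j_max[of "Suc j"] \<open>Suc j < m\<close> by auto
  moreover have "B \<subseteq> set (take (Suc j) xs)"
  proof
    fix y assume "y \<in> B"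
    with B_nth j_max obtain l where "l \<le> j" "l < m" "y = xs ! l" by blast
    with assms(1) show "y \<in> set (take (Suc j) xs)" by (simp add: nth_mem_set_take)
  qed
  ultimately show thesis using that j(2) by blast
qed

locale consistent_setfun_space =
  fixes V :: "'a set" and d :: "'a set \<Rightarrow> 'a set \<Rightarrow> real"
  assumes symmetric: "symmetric_setfun V d"
    and monotone: "monotone_setfun V d"
    and consistent: "consistent_setfun V d"
begin

lemma d_commute: "S \<subseteq> V \<Longrightarrow> T \<subseteq> V \<Longrightarrow> S \<inter> T = {} \<Longrightarrow> d S T = d T S"
  using symmetric unfolding symmetric_setfun_def by blast

lemma monotoneD: "S \<subseteq> V \<Longrightarrow> T \<subseteq> V \<Longrightarrow> S \<inter> T = {} \<Longrightarrow> T' \<subseteq> T \<Longrightarrow> d S T' \<le> d S T"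
  using monotone unfolding monotone_setfun_def by blast

lemma d_mono:
  assumes "A \<subseteq> S" "B \<subseteq> T" "S \<subseteq> V" "T \<subseteq> V" "S \<inter> T = {}"
  shows "d A B \<le> d S T"
proof -
  have "d A B \<le> d A T"
    using assms by (intro monotoneD) auto
  also have "\<dots> = d T A"
    using assms by (intro d_commute) auto
  also have "\<dots> \<le> d T S"
    using assms by (intro monotoneD) auto
  also have "\<dots> = d S T"
    using assms by (intro d_commute) auto
  finally show ?thesis .
qed

lemma consistentD:
  "R \<subseteq> V \<Longrightarrow> S \<subseteq> V \<Longrightarrow> T \<subseteq> V \<Longrightarrow> R \<inter> S = {} \<Longrightarrow> R \<inter> T = {} \<Longrightarrow> S \<inter> T = {} \<Longrightarrow>
    d T R \<le> d S R \<Longrightarrow> d (S \<union> R) T \<le> d S (R \<union> T)"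
  using consistent unfolding consistent_setfun_def by blast

lemma min_threshold_insert_cut:
  assumes "A \<subseteq> V" "B \<subseteq> V" "v \<in> V" "A \<inter> B = {}" "v \<notin> A" "v \<notin> B"
    and "min \<tau> (d {v} B) \<le> min \<tau> (d A B)"
  shows "min \<tau> (d {v} (A \<union> B)) \<le> min \<tau> (d A (insert v B))"
proof (cases "d {v} B \<le> d A B")
  case True
  have "d {v} (A \<union> B) = d (A \<union> B) {v}"
    using assms by (intro d_commute) auto
  also have "\<dots> \<le> d A (B \<union> {v})"
    using assms True by (intro consistentD) (auto simp: Int_commute)
  finally show ?thesis by simp
next
  case False
  have "d A B \<le> d A (insert v B)"
    using assms by (intro d_mono) auto
  with False assms(7) show ?thesis by linarith
qed

end

locale lax_back_ordered = consistent_setfun_space +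
  fixes \<tau> :: real and vs :: "'a list"
  assumes lax_back: "lax_back_order V d \<tau> vs"
begin

lemma distinct_vs: "distinct vs" and set_vs: "set vs = V"
  using lax_back unfolding lax_back_order_def by auto

lemma lax_backD:
  "i < j \<Longrightarrow> j < length vs \<Longrightarrow>
    min \<tau> (d {vs ! j} (set (take i vs))) \<le> min \<tau> (d {vs ! i} (set (take i vs)))"
  using lax_back unfolding lax_back_order_def by blast

lemma set_take_subset_V: "set (take k vs) \<subseteq> V"
  using set_vs by (metis set_take_subset)

lemma cut_bound:
  assumes "m < length vs" "A \<union> B = set (take (Suc m) vs)" "A \<inter> B = {}"
    and "vs ! (m - 1) \<in> A" "vs ! m \<in> B"
  shows "min \<tau> (d {vs ! m} (set (take m vs))) \<le> min \<tau> (d A B)"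
  using assms
proof (induction m arbitrary: A B rule: less_induct)
  case (less m A B)
  let ?v = "vs ! m"
  define B' where "B' = B - {?v}"
  have v_new: "?v \<notin> set (take m vs)"
    using less.prems(1) distinct_vs by (simp add: nth_in_set_take_iff)
  have "set (take (Suc m) vs) = insert ?v (set (take m vs))"
    using less.prems(1) by (simp add: take_Suc_conv_app_nth)
  then have AB_mem: "x \<in> A \<or> x \<in> B \<longleftrightarrow> x = ?v \<or> x \<in> set (take m vs)" for x
    using less.prems(2) by blast
  have A_B': "A \<union> B' = set (take m vs)"
  proof (rule set_eqI)
    fix x
    show "x \<in> A \<union> B' \<longleftrightarrow> x \<in> set (take m vs)"
      using AB_mem[of x] v_new less.prems(3,5) unfolding B'_def by auto
  qed
  have B: "B = insert ?v B'" "?v \<notin> A" "?v \<notin> B'" "A \<inter> B' = {}"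
    using less.prems(3,5) unfolding B'_def by auto
  have V: "A \<subseteq> V" "B' \<subseteq> V" "?v \<in> V"
    using A_B' set_take_subset_V[of m] nth_mem[OF less.prems(1)] set_vs by blast+
  show ?case
  proof (cases "B' = {}")
    case True
    then show ?thesis
      using A_B' B V by (simp add: d_commute)
  next
    case False
    have "vs ! (m - 1) \<notin> B'"
      using less.prems(4) B(4) by blast
    then obtain j where j: "Suc j < m" "vs ! j \<in> B'" "vs ! Suc j \<notin> B'"
        and B'_j: "B' \<subseteq> set (take (Suc j) vs)"
      using obtain_last_index_in[of m vs B'] A_B' False less.prems(1) by auto
    define A' where "A' = A \<inter> set (take (Suc (Suc j)) vs)"
    have "set (take (Suc (Suc j)) vs) \<subseteq> set (take m vs)"
      using j(1) by (simp add: set_take_subset_set_take)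
    then have "B' \<union> A' = set (take (Suc (Suc j)) vs)"
      using A_B' B'_j set_take_subset_set_take[of "Suc j" "Suc (Suc j)" vs] by (auto simp: A'_def)
    moreover have "vs ! Suc j \<in> A'"
      using A_B' j(1,3) less.prems(1) nth_mem_set_take[of "Suc j" m vs]
        nth_mem_set_take[of "Suc j" "Suc (Suc j)" vs]
      unfolding A'_def by auto
    moreover have "B' \<inter> A' = {}"
      using B(4) by (auto simp: A'_def)
    ultimately have IH: "min \<tau> (d {vs ! Suc j} (set (take (Suc j) vs))) \<le> min \<tau> (d B' A')"
      using less.IH[of "Suc j" B' A'] j(1,2) less.prems(1) by simp
    have "min \<tau> (d {?v} B') \<le> min \<tau> (d {?v} (set (take (Suc j) vs)))"
      using V B'_j less.prems(1) distinct_vs j(1)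
      by (intro min.mono order.refl d_mono) (auto simp: set_take_subset_V nth_in_set_take_iff)
    also have "\<dots> \<le> min \<tau> (d {vs ! Suc j} (set (take (Suc j) vs)))"
      using lax_backD j(1) less.prems(1) by simp
    also have "\<dots> \<le> min \<tau> (d B' A')"
      by (fact IH)
    also have "\<dots> \<le> min \<tau> (d B' A)"
      using V B(4) by (intro min.mono order.refl d_mono) (auto simp: A'_def)
    also have "\<dots> = min \<tau> (d A B')"
      using V B(4) by (simp add: d_commute Int_commute)
    finally have "min \<tau> (d {?v} (A \<union> B')) \<le> min \<tau> (d A (insert ?v B'))"
      using V B by (intro min_threshold_insert_cut) auto
    then show ?thesis
      using A_B' B(1) by simp
  qed
qed

end

lemma lambda_conn_attained:
  assumes "finite V" "s \<in> V" "s \<noteq> t"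
  obtains S where "s \<in> S" "S \<subseteq> V" "t \<notin> S" "lambda_conn V d s t = d S (V - S)"
proof -
  let ?C = "{d S (V - S) | S. s \<in> S \<and> S \<subseteq> V \<and> t \<notin> S}"
  have "?C \<subseteq> (\<lambda>S. d S (V - S)) ` Pow V"
    by blast
  then have "finite ?C"
    using assms(1) by (simp add: finite_subset)
  moreover have "d {s} (V - {s}) \<in> ?C"
    using assms(2,3) by blast
  ultimately have "Min ?C \<in> ?C"
    by (intro Min_in) auto
  then show thesis
    using that unfolding lambda_conn_def by auto
qed

theorem lemma5:
  fixes V :: "'a set" and d :: "'a set \<Rightarrow> 'a set \<Rightarrow> real" and \<tau> :: real and vs :: "'a list"
  assumes "finite V"
    and "symmetric_setfun V d"
    and "monotone_setfun V d"
    and "consistent_setfun V d"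
    and "lax_back_order V d \<tau> vs"
    and "2 \<le> i" and "i \<le> length vs"
  shows "min \<tau> (lambda_conn V d (vs ! (i - 2)) (vs ! (i - 1)))
           \<ge> min \<tau> (d {vs ! (i - 1)} (set (take (i - 1) vs)))"
proof -
  interpret lax_back_ordered V d \<tau> vs
    using assms(2-5) by unfold_locales
  let ?s = "vs ! (i - 2)" and ?t = "vs ! (i - 1)" and ?P = "set (take i vs)"
  have "?s \<in> V" "?s \<noteq> ?t"
    using assms(6,7) set_vs distinct_vs by (auto simp: nth_eq_iff_index_eq)
  then obtain S where S: "?s \<in> S" "S \<subseteq> V" "?t \<notin> S"
      and lambda: "lambda_conn V d ?s ?t = d S (V - S)"
    using lambda_conn_attained assms(1) by metis
  have "min \<tau> (d {?t} (set (take (i - 1) vs))) \<le> min \<tau> (d (S \<inter> ?P) (?P - S))"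
    using assms(6,7) S by (intro cut_bound) (auto simp: Suc_diff_Suc numeral_2_eq_2 nth_mem_set_take)
  also have "\<dots> \<le> min \<tau> (d S (V - S))"
    using S(2) set_take_subset_V by (intro min.mono order.refl d_mono) auto
  finally show ?thesis
    unfolding lambda .
qed

end
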